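(* Let $\sigma_{0}^{2}>0$, $C_{\mathrm{P}}>0$ and $\epsilon\in(0,1]$ be such that $H(\epsilon):=2\log\big(\tfrac{2}{C_{\mathrm{P}}\epsilon^{2}}\big)>0$. For $\bar{n},\bar{\sigma}>0$ let \[ G(\bar{n};\bar{\sigma}):=\frac{2}{C_{\mathrm{P}}}\exp\Big\{-\frac{1}{2\bar{\sigma}^{2}}\mathsf{W}^{2}\Big(\frac{C_{\mathrm{P}}\bar{n}\bar{\sigma}^{2}}{2\exp(\bar{\sigma}^{2}/2)}\Big)\Big\},\qquad\mathsf{B}(\bar{n},\bar{\sigma}):=\bar{n}\bar{N},\quad\bar{N}:=\sigma_{0}^{2}/\bar{\sigma}^{2}, \] where $\mathsf{W}$ is the Lambert W function on $[0,\infty)$ (inverse of $x\mapsto xe^{x}$) and $\mathsf{W}^{2}$ its square. Then the function $\mathsf{B}$ on $\mathbb{R}_{+}^{2}$, restricted to the constraint set $\{(\bar{n},\bar{\sigma}):G(\bar{n};\bar{\sigma})=\epsilon^{2}\}$, is minimized when \[ \bar{\sigma}=\bar{\sigma}_{\star}(\epsilon):=\frac{\sqrt{H(\epsilon)+12}-\sqrt{H(\epsilon)}}{2}, \] and $\lim_{H(\epsilon)\to\infty}\sqrt{H(\epsilon)}\,\bar{\sigma}_{\star}(\epsilon)=3$. Moreover, if $H(\epsilon)\ge1$, then taking $\bar{\sigma}(\epsilon)=3/\sqrt{H(\epsilon)}$ and $\bar{n}(\epsilon)$ such that $G(\bar{n}(\epsilon);\bar{\sigma}(\epsilon))=\epsilon^{2}$,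 one has \[ \bar{N}(\epsilon)=\frac{2}{9}\sigma_{0}^{2}\log\Big(\tfrac{2}{C_{\mathrm{P}}\epsilon^{2}}\Big),\quad\bar{n}(\epsilon)\le\frac{4\exp(15/2)}{3C_{\mathrm{P}}}\log\Big(\tfrac{2}{C_{\mathrm{P}}\epsilon^{2}}\Big),\quad\mathsf{B}(\epsilon)\le\frac{8\sigma_{0}^{2}\exp(15/2)}{27C_{\mathrm{P}}}\log\Big(\tfrac{2}{C_{\mathrm{P}}\epsilon^{2}}\Big)^{2}, \] where $\mathsf{B}(\epsilon):=\mathsf{B}(\bar{n}(\epsilon),\bar{\sigma}(\epsilon))$.
   Context: Interpretation (not needed for the statement): $G(n;\sigma)$ is an upper bound on the convergence rate $\|\tilde{P}^{n}f\|_{2}^{2}/\|f\|_{\mathrm{osc}}^{2}$ of a pseudo-marginal chain with lognormal weights $\log W\sim N(-\sigma^{2}/2,\sigma^{2})$ whose marginal chain has a strong Poincaré constant $C_{\mathrm{P}}$, with $\sigma^{2}=\sigma_{0}^{2}/N$ where $N$ is the number of particles. *)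

theory Defs
  imports "HOL-Analysis.Analysis"
begin

definition lambertW :: "real \<Rightarrow> real" where
  "lambertW y = (THE w. 0 \<le> w \<and> w * exp w = y)"

definition Gfun :: "real \<Rightarrow> real \<Rightarrow> real \<Rightarrow> real" where
  "Gfun CP n s = 2 / CP * exp (- (1 / (2 * s\<^sup>2)) * (lambertW (CP * n * s\<^sup>2 / (2 * exp (s\<^sup>2 / 2))))\<^sup>2)"

definition Nbar :: "real \<Rightarrow> real \<Rightarrow> real" where
  "Nbar \<sigma>0 s = \<sigma>0\<^sup>2 / s\<^sup>2"

definition Bfun :: "real \<Rightarrow> real \<Rightarrow> real \<Rightarrow> real" where
  "Bfun \<sigma>0 n s = n * Nbar \<sigma>0 s"

definition Hfun :: "real \<Rightarrow> real \<Rightarrow> real" where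
  "Hfun CP \<epsilon> = 2 * ln (2 / (CP * \<epsilon>\<^sup>2))"

text \<open>sigma_star as a function of the value h = H(eps).\<close>
definition sigma_star :: "real \<Rightarrow> real" where
  "sigma_star h = (sqrt (h + 12) - sqrt h) / 2"

end

theory Submission
  imports Defs "HOL-Real_Asymp.Real_Asymp"
begin

text \<open>Since \<open>\<epsilon>\<^sup>2 = (2/C\<^sub>P) exp(-H/2)\<close>, the constraint \<open>G(n; \<sigma>) = \<epsilon>\<^sup>2\<close> says that the
  argument \<open>y = C\<^sub>P n \<sigma>\<^sup>2 / (2 exp(\<sigma>\<^sup>2/2))\<close> of \<open>W\<close> satisfies \<open>W(y) = \<sigma>\<surd>H\<close>, i.e.
  \<open>y = \<sigma>\<surd>H exp(\<sigma>\<surd>H)\<close>, which determines \<open>n\<close>. Along the constraint the cost \<open>B\<close> is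
  then proportional to \<open>exp(\<sigma>\<^sup>2/2 + \<sigma>\<surd>H) / \<sigma>\<^sup>3\<close>, whose logarithm is convex in \<open>\<sigma>\<close>
  with critical point the positive root \<open>\<sigma>\<^sub>\<star>\<close> of \<open>\<sigma>\<^sup>2 + \<surd>H \<sigma> = 3\<close>. At
  \<open>\<sigma> = 3/\<surd>H\<close> one gets \<open>n = 2H exp(3 + 9/(2H)) / (3C\<^sub>P)\<close>, and \<open>9/(2H) \<le> 9/2\<close> once
  \<open>H \<ge> 1\<close>.\<close>

lemma mult_exp_strict_mono:
  fixes a b :: real
  assumes "0 \<le> a" "a < b"
  shows "a * exp a < b * exp b"
proof -
  have "a * exp a \<le> a * exp b" using assms by (simp add: mult_left_mono)
  also have "\<dots> < b * exp b" using assms by (simp add: mult_strict_right_mono)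
  finally show ?thesis .
qed

lemma mult_exp_inj_nonneg:
  fixes u v :: real
  assumes "0 \<le> u" "0 \<le> v" "u * exp u = v * exp v"
  shows "u = v"
  using assms mult_exp_strict_mono by (cases u v rule: linorder_cases) fastforce+

lemma lambertW:
  fixes y :: real
  assumes "0 \<le> y"
  shows "0 \<le> lambertW y" "lambertW y * exp (lambertW y) = y"
proof -
  have "continuous_on {0..y} (\<lambda>w. w * exp w)"
    by (intro continuous_intros)
  moreover have "y \<le> y * exp y" using assms by (simp add: mult_le_cancel_left1)
  ultimately obtain w where w: "0 \<le> w" "w * exp w = y"
    using IVT'[of "\<lambda>w. w * exp w" 0 y y] assms by auto
  have "lambertW y = w"
    unfolding lambertW_def
  proof (rule the_equality)
    fix v assume "0 \<le> v \<and> v * exp v = y"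
    with w show "v = w" by - (rule mult_exp_inj_nonneg, auto)
  qed (use w in simp)
  with w show "0 \<le> lambertW y" "lambertW y * exp (lambertW y) = y" by simp_all
qed

lemma lambertW_eq_iff:
  fixes y w :: real
  assumes "0 \<le> y" "0 \<le> w"
  shows "lambertW y = w \<longleftrightarrow> w * exp w = y"
proof
  assume "lambertW y = w"
  with lambertW(2)[OF assms(1)] show "w * exp w = y" by simp
next
  assume "w * exp w = y"
  with lambertW[OF assms(1)] assms(2) show "lambertW y = w"
    by - (rule mult_exp_inj_nonneg, auto)
qed

lemma eps_sq_eq_level:
  fixes CP \<epsilon> :: real
  assumes "CP > 0" "\<epsilon> > 0"
  shows "\<epsilon>\<^sup>2 = 2 / CP * exp (- Hfun CP \<epsilon> / 2)"
  using assms by (simp add: Hfun_def exp_minus)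

definition n_level :: "real \<Rightarrow> real \<Rightarrow> real \<Rightarrow> real" where
  "n_level CP h s = 2 * exp (s\<^sup>2 / 2) * sqrt h * exp (s * sqrt h) / (CP * s)"

lemma n_level_pos:
  assumes "CP > 0" "h > 0" "s > 0"
  shows "n_level CP h s > 0"
  using assms by (simp add: n_level_def)

lemma Gfun_eq_level_iff:
  fixes CP h n s :: real
  assumes CP: "CP > 0" and h: "h > 0" and n: "n > 0" and s: "s > 0"
  shows "Gfun CP n s = 2 / CP * exp (- h / 2) \<longleftrightarrow> n = n_level CP h s"
proof -
  define y where "y = CP * n * s\<^sup>2 / (2 * exp (s\<^sup>2 / 2))"
  have y: "0 \<le> y" using assms by (simp add: y_def)
  have "Gfun CP n s = 2 / CP * exp (- h / 2) \<longleftrightarrow> (lambertW y)\<^sup>2 / (2 * s\<^sup>2) = h / 2"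
    using CP by (simp add: Gfun_def y_def)
  also have "\<dots> \<longleftrightarrow> (lambertW y)\<^sup>2 = (s * sqrt h)\<^sup>2"
    using s h by (auto simp: field_simps power_mult_distrib)
  also have "\<dots> \<longleftrightarrow> lambertW y = s * sqrt h"
    using lambertW(1)[OF y] s h by (simp add: power2_eq_iff_nonneg)
  also have "\<dots> \<longleftrightarrow> s * sqrt h * exp (s * sqrt h) = y"
    using y s h by (simp add: lambertW_eq_iff)
  also have "\<dots> \<longleftrightarrow> n = n_level CP h s"
    using CP s by (auto simp: y_def n_level_def field_simps power2_eq_square)
  finally show ?thesis .
qed

lemma Gfun_level_attained:
  assumes "CP > 0" "h > 0" "s > 0"
  shows "\<exists>n>0. Gfun CP n s = 2 / CP * exp (- h / 2)"
proof
  show "n_level CP h s > 0 \<and> Gfun CP (n_level CP h s) s = 2 / CP * exp (- h / 2)"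
    using n_level_pos[OF assms] Gfun_eq_level_iff[OF assms(1,2) _ assms(3)] by simp
qed

lemma Bfun_n_level:
  assumes "CP > 0" "s > 0"
  shows "Bfun \<sigma>0 (n_level CP h s) s
    = 2 * \<sigma>0\<^sup>2 * sqrt h / CP * (exp (s\<^sup>2 / 2 + s * sqrt h) / s ^ 3)"
  unfolding Bfun_def Nbar_def n_level_def exp_add using assms
  by (simp add: field_simps power2_eq_square power3_eq_cube)

lemma sigma_star_pos: "h \<ge> 0 \<Longrightarrow> sigma_star h > 0"
  by (simp add: sigma_star_def)

lemma sigma_star_root:
  assumes "h \<ge> 0"
  shows "(sigma_star h)\<^sup>2 + sqrt h * sigma_star h = 3"
proof -
  have "((a - b) / 2)\<^sup>2 + b * ((a - b) / 2) = (a\<^sup>2 - b\<^sup>2) / 4" for a b :: real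
    by (simp add: field_simps power2_eq_square)
  from this[of "sqrt (h + 12)" "sqrt h"] show ?thesis
    using assms by (simp add: sigma_star_def)
qed

text \<open>The function \<open>s \<mapsto> s\<^sup>2/2 + q s - 3 ln s\<close> exceeds its value at the critical point \<open>t\<close>
  by \<open>(s - t)\<^sup>2/2 + 3 (s/t - 1 - ln (s/t))\<close>.\<close>

lemma exp_div_cube_min_at_root:
  fixes q t s :: real
  assumes t: "t > 0" and s: "s > 0" and root: "t\<^sup>2 + q * t = 3"
  shows "exp (t\<^sup>2 / 2 + t * q) / t ^ 3 \<le> exp (s\<^sup>2 / 2 + s * q) / s ^ 3"
proof -
  have q: "q = 3 / t - t" using root t by (simp add: field_simps power2_eq_square)
  have "(s\<^sup>2 / 2 + s * q) - (t\<^sup>2 / 2 + t * q) = (s - t)\<^sup>2 / 2 + 3 * (s / t - 1)"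
    unfolding q using t by (simp add: field_simps power2_eq_square)
  moreover have "ln (s / t) \<le> s / t - 1" using s t by (intro ln_le_minus_one) simp
  ultimately have "3 * ln (s / t) \<le> (s\<^sup>2 / 2 + s * q) - (t\<^sup>2 / 2 + t * q)"
    using zero_le_power2[of "s - t"] by argo
  then have "exp (3 * ln (s / t)) \<le> exp (s\<^sup>2 / 2 + s * q) / exp (t\<^sup>2 / 2 + t * q)"
    unfolding exp_diff[symmetric] by simp
  moreover have "exp (3 * ln (s / t)) = s ^ 3 / t ^ 3"
    using exp_of_nat_mult[of 3 "ln (s / t)"] s t by (simp add: power_divide)
  ultimately show ?thesis
    using s t by (simp add: divide_simps mult.commute)
qed

lemma Bfun_min_at_sigma_star:
  fixes CP h \<sigma>0 :: real
  assumes CP: "CP > 0" and h: "h > 0"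
  shows "\<exists>n\<^sub>s>0. Gfun CP n\<^sub>s (sigma_star h) = 2 / CP * exp (- h / 2) \<and>
    (\<forall>n s. n > 0 \<longrightarrow> s > 0 \<longrightarrow> Gfun CP n s = 2 / CP * exp (- h / 2) \<longrightarrow>
      Bfun \<sigma>0 n\<^sub>s (sigma_star h) \<le> Bfun \<sigma>0 n s)"
proof (intro exI conjI allI impI)
  define t where "t = sigma_star h"
  have t: "t > 0" "t\<^sup>2 + sqrt h * t = 3"
    using h sigma_star_pos sigma_star_root by (simp_all add: t_def)
  show "n_level CP h t > 0" using n_level_pos CP h t by simp
  then show "Gfun CP (n_level CP h t) (sigma_star h) = 2 / CP * exp (- h / 2)"
    using Gfun_eq_level_iff CP h t by (simp add: t_def)
  fix n s :: real
  assume "n > 0" "s > 0" "Gfun CP n s = 2 / CP * exp (- h / 2)"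
  then have n: "n = n_level CP h s" using Gfun_eq_level_iff CP h by blast
  have "Bfun \<sigma>0 (n_level CP h t) t \<le> Bfun \<sigma>0 (n_level CP h s) s"
    unfolding Bfun_n_level[OF CP t(1)] Bfun_n_level[OF CP \<open>s > 0\<close>]
    using t CP h \<open>s > 0\<close> by (intro mult_left_mono exp_div_cube_min_at_root) auto
  then show "Bfun \<sigma>0 (n_level CP h t) (sigma_star h) \<le> Bfun \<sigma>0 n s"
    by (simp add: n t_def)
qed

lemma sqrt_mult_sigma_star_tendsto: "((\<lambda>h. sqrt h * sigma_star h) \<longlongrightarrow> 3) at_top"
  unfolding sigma_star_def by real_asymp

lemma n_level_three_div_sqrt:
  assumes "h > 0"
  shows "n_level CP h (3 / sqrt h) = 2 * h * exp (3 + 9 / (2 * h)) / (3 * CP)"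
proof -
  have "sqrt h / (3 / sqrt h) = h / 3" using assms by (simp add: field_simps)
  moreover have "(3 / sqrt h)\<^sup>2 / 2 = 9 / (2 * h)" using assms by (simp add: power_divide)
  moreover have "3 / sqrt h * sqrt h = 3" using assms by simp
  ultimately show ?thesis
    unfolding n_level_def exp_add by (simp add: field_simps)
qed

lemma cost_bounds_at_three_div_sqrt:
  fixes CP h L \<sigma>0 :: real
  assumes CP: "CP > 0" and hL: "h = 2 * L" and h: "h \<ge> 1"
  shows "(\<exists>n>0. Gfun CP n (3 / sqrt h) = 2 / CP * exp (- h / 2)) \<and>
    (\<forall>n. n > 0 \<longrightarrow> Gfun CP n (3 / sqrt h) = 2 / CP * exp (- h / 2) \<longrightarrow>
       Nbar \<sigma>0 (3 / sqrt h) = 2 / 9 * \<sigma>0\<^sup>2 * L \<and>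
       n \<le> 4 * exp (15 / 2) / (3 * CP) * L \<and>
       Bfun \<sigma>0 n (3 / sqrt h) \<le> 8 * \<sigma>0\<^sup>2 * exp (15 / 2) / (27 * CP) * L\<^sup>2)"
proof (intro conjI allI impI)
  have s: "3 / sqrt h > 0" using h by simp
  then show "\<exists>n>0. Gfun CP n (3 / sqrt h) = 2 / CP * exp (- h / 2)"
    using CP h by (intro Gfun_level_attained) auto
  show Nbar: "Nbar \<sigma>0 (3 / sqrt h) = 2 / 9 * \<sigma>0\<^sup>2 * L"
    using h hL by (simp add: Nbar_def power_divide)
  fix n
  assume "n > 0" "Gfun CP n (3 / sqrt h) = 2 / CP * exp (- h / 2)"
  then have "n = n_level CP h (3 / sqrt h)"
    using Gfun_eq_level_iff[OF CP _ _ s] h by simp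
  also have "\<dots> = 4 * exp (3 + 9 / (2 * h)) / (3 * CP) * L"
    using h hL by (simp add: n_level_three_div_sqrt)
  also have "\<dots> \<le> 4 * exp (15 / 2) / (3 * CP) * L"
    using CP h hL by (intro mult_right_mono divide_right_mono) (auto simp: field_simps)
  finally show n_le: "n \<le> 4 * exp (15 / 2) / (3 * CP) * L" .
  have "Bfun \<sigma>0 n (3 / sqrt h) = n * (2 / 9 * \<sigma>0\<^sup>2 * L)"
    by (simp add: Bfun_def Nbar)
  also have "\<dots> \<le> 4 * exp (15 / 2) / (3 * CP) * L * (2 / 9 * \<sigma>0\<^sup>2 * L)"
    using n_le h hL by (intro mult_right_mono) auto
  also have "\<dots> = 8 * \<sigma>0\<^sup>2 * exp (15 / 2) / (27 * CP) * L\<^sup>2"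
    by (simp add: power2_eq_square)
  finally show "Bfun \<sigma>0 n (3 / sqrt h) \<le> 8 * \<sigma>0\<^sup>2 * exp (15 / 2) / (27 * CP) * L\<^sup>2" .
qed

theorem proposition57:
  fixes \<sigma>0 CP \<epsilon> :: real
  assumes "\<sigma>0\<^sup>2 > 0" and "CP > 0" and "0 < \<epsilon>" and "\<epsilon> \<le> 1"
    and "Hfun CP \<epsilon> > 0"
  shows
    "(\<exists>n\<^sub>s. n\<^sub>s > 0 \<and> Gfun CP n\<^sub>s (sigma_star (Hfun CP \<epsilon>)) = \<epsilon>\<^sup>2 \<and>
        (\<forall>n s. n > 0 \<longrightarrow> s > 0 \<longrightarrow> Gfun CP n s = \<epsilon>\<^sup>2 \<longrightarrow>
            Bfun \<sigma>0 n\<^sub>s (sigma_star (Hfun CP \<epsilon>)) \<le> Bfun \<sigma>0 n s))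
     \<and> ((\<lambda>h. sqrt h * sigma_star h) \<longlongrightarrow> 3) at_top
     \<and> (Hfun CP \<epsilon> \<ge> 1 \<longrightarrow>
          (let s = 3 / sqrt (Hfun CP \<epsilon>); L = ln (2 / (CP * \<epsilon>\<^sup>2)) in
            (\<exists>n. n > 0 \<and> Gfun CP n s = \<epsilon>\<^sup>2) \<and>
            (\<forall>n. n > 0 \<longrightarrow> Gfun CP n s = \<epsilon>\<^sup>2 \<longrightarrow>
               Nbar \<sigma>0 s = 2 / 9 * \<sigma>0\<^sup>2 * L \<and>
               n \<le> 4 * exp (15 / 2) / (3 * CP) * L \<and>
               Bfun \<sigma>0 n s \<le> 8 * \<sigma>0\<^sup>2 * exp (15 / 2) / (27 * CP) * L\<^sup>2)))"
proof -
  define h where "h = Hfun CP \<epsilon>"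
  define L where "L = ln (2 / (CP * \<epsilon>\<^sup>2))"
  have hL: "h = 2 * L" by (simp add: h_def L_def Hfun_def)
  have h: "h > 0" using assms(5) by (simp add: h_def)
  have level: "\<epsilon>\<^sup>2 = 2 / CP * exp (- h / 2)"
    unfolding h_def using assms(2,3) by (rule eps_sq_eq_level)
  show ?thesis
    unfolding Let_def h_def[symmetric] L_def[symmetric] unfolding level
    using Bfun_min_at_sigma_star[OF assms(2) h] sqrt_mult_sigma_star_tendsto
      cost_bounds_at_three_div_sqrt[OF assms(2) hL] by blast
qed

end
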